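(* Let $n\ge1$, $m\leq2^{n+1}$, and let $I$ be a homogeneous saturated bi-ideal of $H=\mathrm{CK}(n)^*(\mathrm{SO}_m)$. Let $k\ge1$ be an integer with $2^n-1-2k\ge1$. If $e_{2^n-1-2k}\in I$, then $e_{2^n-1-k}\in I$.
   Context: Base field of characteristic $0$, prime $2$. $\mathrm{CK}(n)^*=\Omega^*\otimes_{\mathbb L}\mathbb F_2[v_n]$ algebraic connective Morava K-theory, $|v_n|=1-2^n$. For $m\le2^{n+1}$, $H=\mathbb F_2[v_n][e_1,\dots,e_s]/(e_i^2-e_{2i})$, $s=\lfloor\frac{m-1}{2}\rfloor$, $e_j=0$ for $j>s$, with generators $e_i$ ($\deg e_i=i$) whose co-multiplication (induced by group multiplication of the split $\mathrm{SO}_m$) is: with $\langle t\rangle=2^n-1-t$ and $\nu_2$ the 2-adic valuation, $\widetilde\Delta(e_{\langle 2k\rangle})=\sum_{i=0}^{\nu_2(k)}v_n^{i+1}e_{\langle k/2^i\rangle}\otimes e_{\langle k/2^i\rangle}\prod_{j<i}(e_{\langle k/2^j\rangle}\otimes1+1\otimes e_{\langle k/2^j\rangle})$ for $0<k<2^{n-1}$ and $\widetilde\Delta(e_{2^n-1})=v_ne_{2^n-1}\otimes e_{2^n-1}$, where $\widetilde\Delta(x)=\Delta(x)-x\otimes1-1\otimes x$. A bi-ideal is an ideal $I$ with $\Delta(I)\subseteq I\otimes H+H\otimes I$ and $\varepsilon(I)=0$; saturated means $v_nx\in I\Rightarrow x\in I$. *)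

theory Defs
  imports "HOL-Library.Poly_Mapping" "HOL-Library.Z2" "HOL-Computational_Algebra.Primes"
begin

type_synonym 'v mpoly = "('v \<Rightarrow>\<^sub>0 nat) \<Rightarrow>\<^sub>0 bit"

definition mvar :: "'v \<Rightarrow> 'v mpoly" where
  "mvar x = Poly_Mapping.single (Poly_Mapping.single x 1) 1"

definition mconst :: "bit \<Rightarrow> 'v mpoly" where
  "mconst c = Poly_Mapping.single 0 c"

definition peval :: "('v \<Rightarrow> 'w mpoly) \<Rightarrow> 'v mpoly \<Rightarrow> 'w mpoly" where
  "peval f p = (\<Sum>mon\<in>Poly_Mapping.keys p. mconst (Poly_Mapping.lookup p mon) *
                   (\<Prod>x\<in>Poly_Mapping.keys (mon :: 'v \<Rightarrow>\<^sub>0 nat). f x ^ Poly_Mapping.lookup mon x))"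

definition is_ideal :: "'a::comm_ring_1 set \<Rightarrow> bool" where
  "is_ideal I \<longleftrightarrow> 0 \<in> I \<and> (\<forall>x\<in>I. \<forall>y\<in>I. x + y \<in> I) \<and> (\<forall>a. \<forall>x\<in>I. a * x \<in> I)"

definition gen_ideal :: "'a::comm_ring_1 set \<Rightarrow> 'a set" where
  "gen_ideal S = \<Inter>{I. is_ideal I \<and> S \<subseteq> I}"

section \<open>The algebra H = CK(n)^*(SO_m), presented as F_2[v][e_1,e_2,...] modulo J\<close>

text \<open>Variables of H: v (= v_n) and e_i.  Variables of H \<otimes> H over F_2[v]:
  v, e_i \<otimes> 1 (TL i) and 1 \<otimes> e_i (TR i).\<close>
datatype hvar = Vv | E nat
datatype tvar = TV | TL nat | TR nat

definition s_of :: "nat \<Rightarrow> nat" where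
  "s_of m = (m - 1) div 2"

text \<open>Defining relations: e_i^2 = e_{2i} for 1 \<le> i \<le> s, e_j = 0 for j > s
  (and the unused index 0 is killed as well).\<close>
definition relJ :: "nat \<Rightarrow> hvar mpoly set" where
  "relJ m = gen_ideal
     ({mvar (E i) ^ 2 - mvar (E (2 * i)) | i. 1 \<le> i \<and> i \<le> s_of m}
      \<union> {mvar (E j) | j. j > s_of m} \<union> {mvar (E 0)})"

definition br :: "nat \<Rightarrow> nat \<Rightarrow> nat" where
  "br n t = 2 ^ n - 1 - t"

definition delta_odd :: "nat \<Rightarrow> nat \<Rightarrow> tvar mpoly" where
  "delta_odd n i =
     (if i = 2 ^ n - 1 then
        mvar (TL i) + mvar (TR i) + mvar TV * mvar (TL i) * mvar (TR i)
      else if i < 2 ^ n - 1 then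
        (let k = (2 ^ n - 1 - i) div 2 in
          mvar (TL i) + mvar (TR i) +
          (\<Sum>j\<le>multiplicity (2::nat) k.
             mvar TV ^ (j + 1) * mvar (TL (br n (k div 2 ^ j))) * mvar (TR (br n (k div 2 ^ j)))
             * (\<Prod>l<j. mvar (TL (br n (k div 2 ^ l))) + mvar (TR (br n (k div 2 ^ l))))))
      else mvar (TL i) + mvar (TR i))"

text \<open>All generators: e_{2i} = e_i^2, so Delta(e_{2i}) = Delta(e_i)^2.\<close>
function dgen :: "nat \<Rightarrow> nat \<Rightarrow> tvar mpoly" where
  "dgen n i = (if i = 0 then mvar (TL 0) + mvar (TR 0)
               else if odd i then delta_odd n i
               else (dgen n (i div 2)) ^ 2)"
  by pat_completeness auto
termination by (relation "measure snd") auto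

definition Delta :: "nat \<Rightarrow> hvar mpoly \<Rightarrow> tvar mpoly" where
  "Delta n = peval (\<lambda>x. case x of Vv \<Rightarrow> mvar TV | E i \<Rightarrow> dgen n i)"

definition counit :: "hvar mpoly \<Rightarrow> hvar mpoly" where
  "counit = peval (\<lambda>x. case x of Vv \<Rightarrow> mvar Vv | E i \<Rightarrow> 0)"

definition embL :: "hvar mpoly \<Rightarrow> tvar mpoly" where
  "embL = peval (\<lambda>x. case x of Vv \<Rightarrow> mvar TV | E i \<Rightarrow> mvar (TL i))"

definition embR :: "hvar mpoly \<Rightarrow> tvar mpoly" where
  "embR = peval (\<lambda>x. case x of Vv \<Rightarrow> mvar TV | E i \<Rightarrow> mvar (TR i))"

definition wt :: "nat \<Rightarrow> hvar \<Rightarrow> int" where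
  "wt n x = (case x of Vv \<Rightarrow> 1 - 2 ^ n | E i \<Rightarrow> int i)"

definition hdeg :: "nat \<Rightarrow> (hvar \<Rightarrow>\<^sub>0 nat) \<Rightarrow> int" where
  "hdeg n mon = (\<Sum>x\<in>Poly_Mapping.keys mon. wt n x * int (Poly_Mapping.lookup mon x))"

definition hcomp :: "nat \<Rightarrow> int \<Rightarrow> hvar mpoly \<Rightarrow> hvar mpoly" where
  "hcomp n d p = Abs_poly_mapping (\<lambda>mon. if hdeg n mon = d then Poly_Mapping.lookup p mon else 0)"

text \<open>An ideal of H is represented by its preimage I in F_2[v][e_1,e_2,...],
  i.e. an ideal containing relJ m.\<close>
definition H_ideal :: "nat \<Rightarrow> hvar mpoly set \<Rightarrow> bool" where
  "H_ideal m I \<longleftrightarrow> is_ideal I \<and> relJ m \<subseteq> I"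

definition homogeneous_ideal :: "nat \<Rightarrow> hvar mpoly set \<Rightarrow> bool" where
  "homogeneous_ideal n I \<longleftrightarrow> (\<forall>p\<in>I. \<forall>d. hcomp n d p \<in> I)"

definition saturated :: "hvar mpoly set \<Rightarrow> bool" where
  "saturated I \<longleftrightarrow> (\<forall>x. mvar Vv * x \<in> I \<longrightarrow> x \<in> I)"

text \<open>Bi-ideal: Delta(I) \<subseteq> I \<otimes> H + H \<otimes> I and counit(I) = 0.  The preimage of
  I \<otimes> H + H \<otimes> I in F_2[v][e_i \<otimes> 1, 1 \<otimes> e_i] is the ideal generated by the
  two copies of (the preimage of) I.\<close>
definition bi_ideal :: "nat \<Rightarrow> nat \<Rightarrow> hvar mpoly set \<Rightarrow> bool" where
  "bi_ideal n m I \<longleftrightarrow> H_ideal m I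
     \<and> (\<forall>x\<in>I. Delta n x \<in> gen_ideal (embL ` I \<union> embR ` I))
     \<and> (\<forall>x\<in>I. counit x = 0)"

end

theory Submission
  imports Defs "HOL.Vector_Spaces"
begin

text \<open>Write \<open>N = 2^n - 1\<close>, \<open>i = N - 2k\<close> and \<open>a = N - k\<close>.  Since \<open>e\<^sub>i \<in> I\<close>, the
  coproduct \<open>\<Delta>(e\<^sub>i)\<close> lies in \<open>I \<otimes> H + H \<otimes> I\<close>.  Set \<open>v = 1\<close> and contract the right tensor
  factor against an \<open>\<bbbF>\<^sub>2\<close>-linear functional \<open>f\<close> vanishing on \<open>I|\<^sub>v\<^sub>=\<^sub>1\<close> and on every
  monomial whose \<open>e\<close>-degree is not \<open>a\<close> modulo \<open>N\<close>.  The result lies in \<open>I|\<^sub>v\<^sub>=\<^sub>1\<close>; on the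
  other hand, in the explicit formula for \<open>\<Delta>(e\<^sub>i)\<close> only the term \<open>v e\<^sub>a \<otimes> e\<^sub>a\<close> has a right
  factor of degree \<open>a\<close> modulo \<open>N\<close>, so the result is \<open>f(e\<^sub>a) e\<^sub>a\<close>.  Hence \<open>e\<^sub>a\<close> lies in
  \<open>I|\<^sub>v\<^sub>=\<^sub>1\<close> plus the span of the monomials of the wrong degree modulo \<open>N\<close>.  As \<open>I\<close> is
  homogeneous and \<open>deg v = -N\<close>, the part of degree \<open>a\<close> modulo \<open>N\<close> of an element of \<open>I|\<^sub>v\<^sub>=\<^sub>1\<close>
  lifts back into \<open>I\<close> after multiplication by a power of \<open>v\<close>, which saturation removes.\<close>

lemma mconst_0 [simp]: "mconst 0 = 0"
  by (simp add: mconst_def)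

lemma mconst_1 [simp]: "mconst 1 = 1"
  by (simp add: mconst_def)

lemma mconst_add: "mconst (a + b) = mconst a + mconst b"
  by (simp only: mconst_def single_add)

lemma mconst_mult: "mconst (a * b) = mconst a * mconst b"
  by (simp add: mconst_def mult_single)

lemma mconst_mult_single_1: "mconst c * Poly_Mapping.single \<mu> 1 = Poly_Mapping.single \<mu> c"
  by (simp add: mconst_def mult_single)

lemma lookup_mconst_mult: "Poly_Mapping.lookup (mconst c * q) \<rho> = c * Poly_Mapping.lookup q \<rho>"
  by (simp add: mconst_def flip: mult_map_scale_conv_mult) (simp add: Poly_Mapping.map.rep_eq)

lemma mvar_power: "mvar x ^ k = Poly_Mapping.single (Poly_Mapping.single x k) 1"
proof (induction k)
  case (Suc k)
  have "mvar x ^ Suc k = mvar x * mvar x ^ k" by simp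
  also have "\<dots> = Poly_Mapping.single (Poly_Mapping.single x 1 + Poly_Mapping.single x k) 1"
    by (simp only: Suc) (simp add: mvar_def mult_single)
  finally show ?case
    by (simp only: single_add[symmetric] plus_1_eq_Suc)
qed simp

lemma prod_single_1:
  "finite S \<Longrightarrow> (\<Prod>x\<in>S. Poly_Mapping.single (\<mu> x) (1::'b::comm_semiring_1)) = Poly_Mapping.single (\<Sum>x\<in>S. \<mu> x) 1"
  by (induction S rule: finite_induct) (auto simp: mult_single)

lemma prod_mvar: "finite X \<Longrightarrow> (\<Prod>l\<in>X. mvar (h l)) = Poly_Mapping.single (\<Sum>l\<in>X. Poly_Mapping.single (h l) 1) (1::bit)"
  unfolding mvar_def by (rule prod_single_1)

lemma mpoly_add_self: "(p::'v mpoly) + p = 0"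
  by (rule poly_mapping_eqI) (simp only: lookup_add lookup_zero, simp)

lemma mpoly_two [simp]: "2 * (p::'v mpoly) = 0"
  by (simp only: mult_2 mpoly_add_self)

lemma peval_mvar: "peval f (mvar x) = f x"
  by (simp add: peval_def mvar_def)

definition lin_ext :: "(('v \<Rightarrow>\<^sub>0 nat) \<Rightarrow> 'w mpoly) \<Rightarrow> 'v mpoly \<Rightarrow> 'w mpoly" where
  "lin_ext g p = (\<Sum>\<mu>\<in>Poly_Mapping.keys p. mconst (Poly_Mapping.lookup p \<mu>) * g \<mu>)"

lemma peval_eq_lin_ext:
  "peval f = lin_ext (\<lambda>\<mu>. \<Prod>x\<in>Poly_Mapping.keys \<mu>. f x ^ Poly_Mapping.lookup \<mu> x)"
  unfolding peval_def lin_ext_def by (rule ext) simp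

lemma lin_ext_add: "lin_ext g (p + q) = lin_ext g p + lin_ext g q"
  unfolding lin_ext_def
  by (rule setsum_keys_plus_distrib[where f="\<lambda>\<mu> c. mconst c * g \<mu>"]) (auto simp: mconst_add distrib_right)

lemma lin_ext_zero [simp]: "lin_ext g 0 = 0"
  by (simp add: lin_ext_def)

lemma lin_ext_single [simp]: "lin_ext g (Poly_Mapping.single \<mu> 1) = g \<mu>"
  by (simp add: lin_ext_def)

lemma lin_ext_sum: "lin_ext g (\<Sum>j\<in>J. p j) = (\<Sum>j\<in>J. lin_ext g (p j))"
  by (induction J rule: infinite_finite_induct) (auto simp: lin_ext_add)

lemma lin_ext_mconst: "lin_ext g (mconst c * p) = mconst c * lin_ext g p"
  by (cases c) auto

lemma lin_ext_cong: "(\<And>\<mu>. \<mu> \<in> Poly_Mapping.keys p \<Longrightarrow> g \<mu> = h \<mu>) \<Longrightarrow> lin_ext g p = lin_ext h p"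
  unfolding lin_ext_def by (auto intro: sum.cong)

lemma lin_ext_eq_0: "(\<And>\<mu>. \<mu> \<in> Poly_Mapping.keys p \<Longrightarrow> g \<mu> = 0) \<Longrightarrow> lin_ext g p = 0"
  using lin_ext_cong[of p g "\<lambda>_. 0"] by (simp add: lin_ext_def)

lemma mult_lin_ext: "c * lin_ext g p = lin_ext (\<lambda>\<mu>. c * g \<mu>) p"
  unfolding lin_ext_def sum_distrib_left by (simp add: ac_simps)

lemma lin_ext_mult: "lin_ext g p * c = lin_ext (\<lambda>\<mu>. g \<mu> * c) p"
  unfolding lin_ext_def sum_distrib_right by (simp add: ac_simps)

lemma lin_ext_fun_add: "lin_ext (\<lambda>\<mu>. g \<mu> + h \<mu>) p = lin_ext g p + lin_ext h p"
  unfolding lin_ext_def by (simp add: distrib_left sum.distrib)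

lemma lin_ext_fun_sum: "finite D \<Longrightarrow> lin_ext (\<lambda>\<mu>. \<Sum>d\<in>D. g d \<mu>) p = (\<Sum>d\<in>D. lin_ext (g d) p)"
  by (induction D rule: finite_induct) (simp_all add: lin_ext_fun_add lin_ext_def)

lemma lin_ext_single_id: "lin_ext (\<lambda>\<mu>. Poly_Mapping.single \<mu> 1) p = p"
  by (rule poly_mapping_eqI)
    (simp add: lin_ext_def mconst_mult_single_1 lookup_sum lookup_single when_def in_keys_iff)

lemma lookup_lin_ext:
  "Poly_Mapping.lookup (lin_ext g p) \<rho> = (\<Sum>\<mu>\<in>Poly_Mapping.keys p. Poly_Mapping.lookup p \<mu> * Poly_Mapping.lookup (g \<mu>) \<rho>)"
  unfolding lin_ext_def by (simp add: lookup_sum lookup_mconst_mult)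

lemma lin_ext_hom:
  assumes add: "\<And>x y. T (x + y) = T x + T y" and scale: "\<And>c x. T (mconst c * x) = mconst c * T x"
  shows "T (lin_ext g p) = lin_ext (\<lambda>\<mu>. T (g \<mu>)) p"
proof -
  have T0: "T 0 = 0" using add[of 0 0] by simp
  have "T (\<Sum>\<mu>\<in>S. mconst (Poly_Mapping.lookup p \<mu>) * g \<mu>) = (\<Sum>\<mu>\<in>S. mconst (Poly_Mapping.lookup p \<mu>) * T (g \<mu>))" for S
    by (induction S rule: infinite_finite_induct) (simp_all add: T0 add scale)
  then show ?thesis unfolding lin_ext_def .
qed

lemma lin_ext_lin_ext: "lin_ext g (lin_ext h p) = lin_ext (\<lambda>\<mu>. lin_ext g (h \<mu>)) p"
  by (rule lin_ext_hom) (simp_all add: lin_ext_add lin_ext_mconst)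

lemma additive_lin_ext:
  assumes add: "\<And>x y. f (x + y) = f x + f y"
  shows "mconst (f (lin_ext g p)) = lin_ext (\<lambda>\<mu>. mconst (f (g \<mu>))) p"
proof (rule lin_ext_hom)
  have f0: "f 0 = 0" using add[of 0 0] by simp
  show "mconst (f (x + y)) = mconst (f x) + mconst (f y)" for x y
    by (simp only: add mconst_add)
  show "mconst (f (mconst c * x)) = mconst c * mconst (f x)" for c x
    by (cases c) (simp_all add: f0)
qed

lemma lin_ext_mem:
  assumes "0 \<in> K" "\<And>x y. x \<in> K \<Longrightarrow> y \<in> K \<Longrightarrow> x + y \<in> K"
    and "\<And>\<mu>. \<mu> \<in> Poly_Mapping.keys p \<Longrightarrow> g \<mu> \<in> K"
  shows "lin_ext g p \<in> K"
proof -
  have "\<forall>\<mu>\<in>S. g \<mu> \<in> K \<Longrightarrow> (\<Sum>\<mu>\<in>S. mconst (Poly_Mapping.lookup p \<mu>) * g \<mu>) \<in> K" for S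
  proof (induction S rule: infinite_finite_induct)
    case (insert x F)
    then show ?case using assms(1,2) by (cases "Poly_Mapping.lookup p x") auto
  qed (use assms in auto)
  then show ?thesis unfolding lin_ext_def using assms(3) by blast
qed

lemma single_mult_eq_lin_ext:
  "Poly_Mapping.single \<mu> 1 * p = lin_ext (\<lambda>\<nu>. Poly_Mapping.single (\<mu> + \<nu>) 1) p"
  by (subst lin_ext_single_id[of p, symmetric]) (simp add: mult_lin_ext mult_single)

lemma mult_eq_lin_ext: "p * q = lin_ext (\<lambda>\<mu>. Poly_Mapping.single \<mu> 1 * q) p"
  using lin_ext_mult[of "\<lambda>\<mu>. Poly_Mapping.single \<mu> 1" p q] by (simp only: lin_ext_single_id)

definition single_opt :: "'b option \<Rightarrow> nat \<Rightarrow> ('b \<Rightarrow>\<^sub>0 nat)" where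
  "single_opt y c = (case y of None \<Rightarrow> 0 | Some y' \<Rightarrow> Poly_Mapping.single y' c)"

definition mon_map :: "('a \<Rightarrow> 'b option) \<Rightarrow> ('a \<Rightarrow>\<^sub>0 nat) \<Rightarrow> ('b \<Rightarrow>\<^sub>0 nat)" where
  "mon_map g \<mu> = (\<Sum>x\<in>Poly_Mapping.keys \<mu>. single_opt (g x) (Poly_Mapping.lookup \<mu> x))"

lemma single_opt_simps [simp]:
  "single_opt None c = 0" "single_opt (Some y) c = Poly_Mapping.single y c" "single_opt z 0 = 0"
  by (auto simp: single_opt_def split: option.splits)

lemma single_opt_add: "single_opt y (a + b) = single_opt y a + single_opt y b"
  by (auto simp: single_opt_def single_add split: option.splits)

lemma mon_map_add: "mon_map g (\<mu> + \<nu>) = mon_map g \<mu> + mon_map g \<nu>"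
  unfolding mon_map_def by (rule setsum_keys_plus_distrib) (auto simp: single_opt_add)

lemma mon_map_zero [simp]: "mon_map g 0 = 0"
  by (simp add: mon_map_def)

lemma mon_map_single [simp]: "mon_map g (Poly_Mapping.single x c) = single_opt (g x) c"
  by (cases "c = 0") (simp_all add: mon_map_def)

lemma mon_map_sum: "mon_map g (\<Sum>j\<in>J. \<mu> j) = (\<Sum>j\<in>J. mon_map g (\<mu> j))"
  by (induction J rule: infinite_finite_induct) (auto simp: mon_map_add)

lemma mon_map_mon_map: "mon_map g (mon_map h \<mu>) = mon_map (\<lambda>x. Option.bind (h x) g) \<mu>"
proof -
  have "mon_map g (single_opt y c) = single_opt (Option.bind y g) c" for y c
    by (cases y) auto
  then show ?thesis
    by (simp add: mon_map_def[of h \<mu>] mon_map_sum mon_map_def[of _ \<mu>])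
qed

lemma mon_map_eq_0: "(\<And>x. g x = None) \<Longrightarrow> mon_map g \<mu> = 0"
  by (simp add: mon_map_def)

lemma lookup_mon_map:
  "Poly_Mapping.lookup (mon_map g \<mu>) y = (\<Sum>x\<in>Poly_Mapping.keys \<mu>. if g x = Some y then Poly_Mapping.lookup \<mu> x else 0)"
  unfolding mon_map_def lookup_sum
  by (intro sum.cong refl) (auto simp: single_opt_def lookup_single when_def split: option.splits)

lemma prod_mvar_power:
  "(\<Prod>x\<in>Poly_Mapping.keys \<mu>. mvar (h x) ^ Poly_Mapping.lookup \<mu> x) = Poly_Mapping.single (mon_map (\<lambda>x. Some (h x)) \<mu>) 1"
  by (simp add: mvar_power prod_single_1 mon_map_def)

definition var_left :: "hvar \<Rightarrow> tvar option" where
  "var_left x = Some (case x of Vv \<Rightarrow> TV | E i \<Rightarrow> TL i)"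

definition var_right :: "hvar \<Rightarrow> tvar option" where
  "var_right x = Some (case x of Vv \<Rightarrow> TV | E i \<Rightarrow> TR i)"

definition left_var :: "tvar \<Rightarrow> hvar option" where
  "left_var t = (case t of TL i \<Rightarrow> Some (E i) | _ \<Rightarrow> None)"

definition right_var :: "tvar \<Rightarrow> hvar option" where
  "right_var t = (case t of TR i \<Rightarrow> Some (E i) | _ \<Rightarrow> None)"

definition forget_v :: "hvar \<Rightarrow> hvar option" where
  "forget_v x = (case x of Vv \<Rightarrow> None | E i \<Rightarrow> Some (E i))"

abbreviation "mon_embL \<equiv> mon_map var_left"
abbreviation "mon_embR \<equiv> mon_map var_right"
abbreviation "mon_left \<equiv> mon_map left_var"
abbreviation "mon_right \<equiv> mon_map right_var"
abbreviation "mon_drop_v \<equiv> mon_map forget_v"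

lemma mon_left_mon_embL: "mon_left (mon_embL \<nu>) = mon_drop_v \<nu>"
  unfolding mon_map_mon_map
  by (rule arg_cong[where f="\<lambda>g. mon_map g \<nu>"])
    (auto simp: var_left_def left_var_def forget_v_def split: hvar.splits)

lemma mon_right_mon_embL: "mon_right (mon_embL \<nu>) = 0"
  unfolding mon_map_mon_map by (rule mon_map_eq_0) (simp add: var_left_def right_var_def split: hvar.splits)

lemma mon_left_mon_embR: "mon_left (mon_embR \<nu>) = 0"
  unfolding mon_map_mon_map by (rule mon_map_eq_0) (simp add: var_right_def left_var_def split: hvar.splits)

lemma mon_right_mon_embR: "mon_right (mon_embR \<nu>) = mon_drop_v \<nu>"
  unfolding mon_map_mon_map
  by (rule arg_cong[where f="\<lambda>g. mon_map g \<nu>"])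
    (auto simp: var_right_def right_var_def forget_v_def split: hvar.splits)

lemma mon_drop_v_mon_left: "mon_drop_v (mon_left \<mu>) = mon_left \<mu>"
  unfolding mon_map_mon_map
  by (rule arg_cong[where f="\<lambda>g. mon_map g \<mu>"])
    (auto simp: left_var_def forget_v_def split: tvar.splits)

lemma mon_drop_v_mon_right: "mon_drop_v (mon_right \<mu>) = mon_right \<mu>"
  unfolding mon_map_mon_map
  by (rule arg_cong[where f="\<lambda>g. mon_map g \<mu>"])
    (auto simp: right_var_def forget_v_def split: tvar.splits)

lemma embL_eq_lin_ext: "embL = lin_ext (\<lambda>\<nu>. Poly_Mapping.single (mon_embL \<nu>) 1)"
proof -
  have "(\<lambda>x. case x of Vv \<Rightarrow> mvar TV | E i \<Rightarrow> mvar (TL i)) = (\<lambda>x. mvar (case x of Vv \<Rightarrow> TV | E i \<Rightarrow> TL i))"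
    by (auto split: hvar.splits)
  moreover have "(\<lambda>x. Some (case x of Vv \<Rightarrow> TV | E i \<Rightarrow> TL i)) = var_left"
    by (simp add: var_left_def fun_eq_iff)
  ultimately show ?thesis unfolding embL_def peval_eq_lin_ext by (simp add: prod_mvar_power)
qed

lemma embR_eq_lin_ext: "embR = lin_ext (\<lambda>\<nu>. Poly_Mapping.single (mon_embR \<nu>) 1)"
proof -
  have "(\<lambda>x. case x of Vv \<Rightarrow> mvar TV | E i \<Rightarrow> mvar (TR i)) = (\<lambda>x. mvar (case x of Vv \<Rightarrow> TV | E i \<Rightarrow> TR i))"
    by (auto split: hvar.splits)
  moreover have "(\<lambda>x. Some (case x of Vv \<Rightarrow> TV | E i \<Rightarrow> TR i)) = var_right"
    by (simp add: var_right_def fun_eq_iff)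
  ultimately show ?thesis unfolding embR_def peval_eq_lin_ext by (simp add: prod_mvar_power)
qed

section \<open>Setting \<open>v = 1\<close>\<close>

definition v_exponent :: "(hvar \<Rightarrow>\<^sub>0 nat) \<Rightarrow> nat" where
  "v_exponent \<mu> = Poly_Mapping.lookup \<mu> Vv"

lemma lookup_mon_drop_v:
  "Poly_Mapping.lookup (mon_drop_v \<mu>) y = (if y = Vv then 0 else Poly_Mapping.lookup \<mu> y)"
proof (cases y)
  case Vv
  then show ?thesis by (simp add: lookup_mon_map forget_v_def split: hvar.splits)
next
  case (E i)
  have "Poly_Mapping.lookup (mon_drop_v \<mu>) y = (\<Sum>x\<in>Poly_Mapping.keys \<mu>. if x = E i then Poly_Mapping.lookup \<mu> x else 0)"
    unfolding lookup_mon_map E by (rule sum.cong) (auto simp: forget_v_def split: hvar.splits)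
  also have "\<dots> = Poly_Mapping.lookup \<mu> (E i)"
    by (simp add: in_keys_iff)
  finally show ?thesis using E by simp
qed

lemma mon_drop_v_plus_v_exponent: "mon_drop_v \<mu> + Poly_Mapping.single Vv (v_exponent \<mu>) = \<mu>"
  by (rule poly_mapping_eqI) (simp add: lookup_add lookup_mon_drop_v lookup_single when_def v_exponent_def)

definition drop_v :: "hvar mpoly \<Rightarrow> hvar mpoly" where
  "drop_v = lin_ext (\<lambda>\<mu>. Poly_Mapping.single (mon_drop_v \<mu>) 1)"

lemma drop_v_add: "drop_v (x + y) = drop_v x + drop_v y"
  by (simp add: drop_v_def lin_ext_add)

lemma drop_v_zero [simp]: "drop_v 0 = 0"
  by (simp add: drop_v_def)

lemma drop_v_mconst: "drop_v (mconst c * x) = mconst c * drop_v x"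
  by (simp add: drop_v_def lin_ext_mconst)

lemma drop_v_single_mult:
  "drop_v (Poly_Mapping.single \<mu> 1 * x) = Poly_Mapping.single (mon_drop_v \<mu>) 1 * drop_v x"
  unfolding single_mult_eq_lin_ext drop_v_def lin_ext_lin_ext mult_lin_ext
  by (simp add: mult_single mon_map_add)

definition drop_v_plus_span :: "hvar mpoly set \<Rightarrow> ((hvar \<Rightarrow>\<^sub>0 nat) \<Rightarrow> bool) \<Rightarrow> hvar mpoly set" where
  "drop_v_plus_span I P = {drop_v z + w | z w. z \<in> I \<and> (\<forall>\<mu>\<in>Poly_Mapping.keys w. P \<mu>)}"

lemma drop_v_mem_drop_v_plus_span: "z \<in> I \<Longrightarrow> drop_v z \<in> drop_v_plus_span I P"
  unfolding drop_v_plus_span_def by (rule CollectI, rule exI[of _ z], rule exI[of _ 0]) simp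

lemma single_mem_drop_v_plus_span: "0 \<in> I \<Longrightarrow> P \<mu> \<Longrightarrow> Poly_Mapping.single \<mu> 1 \<in> drop_v_plus_span I P"
  unfolding drop_v_plus_span_def
  by (rule CollectI, rule exI[of _ 0], rule exI[of _ "Poly_Mapping.single \<mu> 1"]) simp

section \<open>Contracting the right tensor factor against a functional\<close>

text \<open>On \<open>H \<otimes> H\<close> with \<open>v = 1\<close>, this is \<open>id \<otimes> f\<close>.\<close>
definition contract_right :: "(hvar mpoly \<Rightarrow> bit) \<Rightarrow> tvar mpoly \<Rightarrow> hvar mpoly" where
  "contract_right f =
     lin_ext (\<lambda>\<mu>. mconst (f (Poly_Mapping.single (mon_right \<mu>) 1)) * Poly_Mapping.single (mon_left \<mu>) 1)"

lemma contract_right_add: "contract_right f (x + y) = contract_right f x + contract_right f y"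
  by (simp add: contract_right_def lin_ext_add)

lemma contract_right_zero [simp]: "contract_right f 0 = 0"
  by (simp add: contract_right_def)

lemma contract_right_sum: "contract_right f (\<Sum>j\<in>J. p j) = (\<Sum>j\<in>J. contract_right f (p j))"
  by (simp add: contract_right_def lin_ext_sum)

lemma contract_right_single:
  "contract_right f (Poly_Mapping.single \<mu> 1) =
     mconst (f (Poly_Mapping.single (mon_right \<mu>) 1)) * Poly_Mapping.single (mon_left \<mu>) 1"
  by (simp add: contract_right_def)

lemma contract_right_mult:
  "contract_right f (c * q) = lin_ext (\<lambda>\<mu>. contract_right f (Poly_Mapping.single \<mu> 1 * q)) c"
  unfolding mult_eq_lin_ext[of c q] contract_right_def by (rule lin_ext_lin_ext)

lemma contract_right_single_mult_embL:
  "contract_right f (Poly_Mapping.single \<mu> 1 * embL x) =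
     mconst (f (Poly_Mapping.single (mon_right \<mu>) 1)) * drop_v (Poly_Mapping.single (mon_left \<mu>) 1 * x)"
proof -
  have "contract_right f (Poly_Mapping.single \<mu> 1 * embL x)
      = lin_ext (\<lambda>\<nu>. contract_right f (Poly_Mapping.single (\<mu> + mon_embL \<nu>) 1)) x"
    unfolding embL_eq_lin_ext mult_lin_ext contract_right_def lin_ext_lin_ext by (simp add: mult_single)
  also have "\<dots> = lin_ext (\<lambda>\<nu>. mconst (f (Poly_Mapping.single (mon_right \<mu>) 1)) *
      (Poly_Mapping.single (mon_left \<mu>) 1 * Poly_Mapping.single (mon_drop_v \<nu>) 1)) x"
    by (simp add: contract_right_single mon_map_add mon_left_mon_embL mon_right_mon_embL mult_single)
  also have "\<dots> = mconst (f (Poly_Mapping.single (mon_right \<mu>) 1)) * drop_v (Poly_Mapping.single (mon_left \<mu>) 1 * x)"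
    by (subst drop_v_single_mult) (simp add: mon_drop_v_mon_left drop_v_def mult_lin_ext)
  finally show ?thesis .
qed

lemma contract_right_single_mult_embR:
  assumes add: "\<And>x y. f (x + y) = f x + f y"
  shows "contract_right f (Poly_Mapping.single \<mu> 1 * embR y) =
     mconst (f (drop_v (Poly_Mapping.single (mon_right \<mu>) 1 * y))) * Poly_Mapping.single (mon_left \<mu>) 1"
proof -
  have "contract_right f (Poly_Mapping.single \<mu> 1 * embR y)
      = lin_ext (\<lambda>\<nu>. contract_right f (Poly_Mapping.single (\<mu> + mon_embR \<nu>) 1)) y"
    unfolding embR_eq_lin_ext mult_lin_ext contract_right_def lin_ext_lin_ext by (simp add: mult_single)
  also have "\<dots> = lin_ext (\<lambda>\<nu>. mconst (f (Poly_Mapping.single (mon_right \<mu> + mon_drop_v \<nu>) 1))) y *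
      Poly_Mapping.single (mon_left \<mu>) 1"
    by (simp add: contract_right_single mon_map_add mon_left_mon_embR mon_right_mon_embR lin_ext_mult)
  also have "lin_ext (\<lambda>\<nu>. mconst (f (Poly_Mapping.single (mon_right \<mu> + mon_drop_v \<nu>) 1))) y
      = mconst (f (lin_ext (\<lambda>\<nu>. Poly_Mapping.single (mon_right \<mu> + mon_drop_v \<nu>) 1) y))"
    by (rule additive_lin_ext[OF add, symmetric])
  also have "lin_ext (\<lambda>\<nu>. Poly_Mapping.single (mon_right \<mu> + mon_drop_v \<nu>) 1) y
      = drop_v (Poly_Mapping.single (mon_right \<mu>) 1 * y)"
    by (subst drop_v_single_mult) (simp add: mon_drop_v_mon_right drop_v_def mult_lin_ext mult_single)
  finally show ?thesis .
qed

inductive_set tensor_ideal :: "hvar mpoly set \<Rightarrow> tvar mpoly set" for I where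
  zero: "0 \<in> tensor_ideal I"
| add_embL: "p \<in> tensor_ideal I \<Longrightarrow> x \<in> I \<Longrightarrow> p + c * embL x \<in> tensor_ideal I"
| add_embR: "p \<in> tensor_ideal I \<Longrightarrow> x \<in> I \<Longrightarrow> p + c * embR x \<in> tensor_ideal I"

lemma tensor_ideal_add: "q \<in> tensor_ideal I \<Longrightarrow> p \<in> tensor_ideal I \<Longrightarrow> p + q \<in> tensor_ideal I"
proof (induction q rule: tensor_ideal.induct)
  case (add_embL q x c)
  then show ?case using tensor_ideal.add_embL[of "p + q" I x c] by (simp add: add.assoc)
next
  case (add_embR q x c)
  then show ?case using tensor_ideal.add_embR[of "p + q" I x c] by (simp add: add.assoc)
qed simp

lemma tensor_ideal_mult: "q \<in> tensor_ideal I \<Longrightarrow> a * q \<in> tensor_ideal I"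
proof (induction q rule: tensor_ideal.induct)
  case zero
  then show ?case by (simp add: tensor_ideal.zero)
next
  case (add_embL q x c)
  then show ?case using tensor_ideal.add_embL[of "a * q" I x "a * c"] by (simp add: distrib_left mult.assoc)
next
  case (add_embR q x c)
  then show ?case using tensor_ideal.add_embR[of "a * q" I x "a * c"] by (simp add: distrib_left mult.assoc)
qed

lemma gen_ideal_subset_tensor_ideal: "gen_ideal (embL ` I \<union> embR ` I) \<subseteq> tensor_ideal I"
proof -
  have "is_ideal (tensor_ideal I)"
    unfolding is_ideal_def using tensor_ideal.zero tensor_ideal_add tensor_ideal_mult by blast
  moreover have "embL ` I \<union> embR ` I \<subseteq> tensor_ideal I"
    using tensor_ideal.add_embL[OF tensor_ideal.zero, of _ I 1]
      tensor_ideal.add_embR[OF tensor_ideal.zero, of _ I 1] by auto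
  ultimately show ?thesis unfolding gen_ideal_def by blast
qed

lemma Delta_mem_tensor_ideal:
  assumes "bi_ideal n m I" and "mvar (E i) \<in> I"
  shows "dgen n i \<in> tensor_ideal I"
proof -
  have "Delta n (mvar (E i)) \<in> gen_ideal (embL ` I \<union> embR ` I)"
    using assms unfolding bi_ideal_def by blast
  moreover have "Delta n (mvar (E i)) = dgen n i"
    by (simp only: Delta_def peval_mvar hvar.case)
  ultimately show ?thesis
    using gen_ideal_subset_tensor_ideal by (metis subsetD)
qed

text \<open>The left copy of \<open>I\<close> is mapped into \<open>I|\<^sub>v\<^sub>=\<^sub>1\<close>, and the right copy is killed because
  \<open>f\<close> vanishes on \<open>I|\<^sub>v\<^sub>=\<^sub>1\<close>.\<close>
lemma contract_right_tensor_ideal: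
  assumes add: "\<And>x y. f (x + y) = f x + f y"
    and vanish: "\<And>z. z \<in> I \<Longrightarrow> f (drop_v z) = 0"
    and I: "is_ideal I"
    and p: "p \<in> tensor_ideal I"
  shows "contract_right f p \<in> drop_v ` I"
proof -
  have I_add: "\<And>x y. x \<in> I \<Longrightarrow> y \<in> I \<Longrightarrow> x + y \<in> I" and I_mult: "\<And>a x. x \<in> I \<Longrightarrow> a * x \<in> I"
    using I unfolding is_ideal_def by auto
  have zero: "0 \<in> drop_v ` I"
    using I unfolding is_ideal_def by (metis image_eqI drop_v_zero)
  have closed_add: "u + w \<in> drop_v ` I" if hu: "u \<in> drop_v ` I" and hw: "w \<in> drop_v ` I" for u w
  proof -
    obtain x y where "x \<in> I" "y \<in> I" "u = drop_v x" "w = drop_v y"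
      using hu hw by blast
    then have "u + w = drop_v (x + y)" "x + y \<in> I"
      by (simp_all add: drop_v_add I_add)
    then show ?thesis by blast
  qed
  have left: "contract_right f (c * embL x) \<in> drop_v ` I" if "x \<in> I" for c x
    unfolding contract_right_mult[of f c "embL x"] contract_right_single_mult_embL
  proof (rule lin_ext_mem[OF zero closed_add])
    fix \<mu>
    have "mconst (f (Poly_Mapping.single (mon_right \<mu>) 1)) * (Poly_Mapping.single (mon_left \<mu>) 1 * x) \<in> I"
      using that I_mult by blast
    then show "mconst (f (Poly_Mapping.single (mon_right \<mu>) 1)) * drop_v (Poly_Mapping.single (mon_left \<mu>) 1 * x) \<in> drop_v ` I"
      by (metis image_eqI drop_v_mconst)
  qed
  have right: "contract_right f (c * embR x) = 0" if "x \<in> I" for c x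
    unfolding contract_right_mult[of f c "embR x"] contract_right_single_mult_embR[OF add]
  proof (rule lin_ext_eq_0)
    fix \<mu>
    have "f (drop_v (Poly_Mapping.single (mon_right \<mu>) 1 * x)) = 0"
      using that I_mult vanish by blast
    then show "mconst (f (drop_v (Poly_Mapping.single (mon_right \<mu>) 1 * x))) * Poly_Mapping.single (mon_left \<mu>) 1 = 0"
      by simp
  qed
  from p show ?thesis
  proof (induction p rule: tensor_ideal.induct)
    case zero
    then show ?case using \<open>0 \<in> drop_v ` I\<close> by simp
  next
    case (add_embL p x c)
    then show ?case unfolding contract_right_add by (intro closed_add left)
  next
    case (add_embR p x c)
    then show ?case unfolding contract_right_add by (simp add: right)
  qed
qed

definition e_weight :: "hvar \<Rightarrow> nat" where
  "e_weight x = (case x of Vv \<Rightarrow> 0 | E i \<Rightarrow> i)"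

definition e_degree :: "(hvar \<Rightarrow>\<^sub>0 nat) \<Rightarrow> nat" where
  "e_degree \<mu> = (\<Sum>x\<in>Poly_Mapping.keys \<mu>. e_weight x * Poly_Mapping.lookup \<mu> x)"

lemma e_degree_add: "e_degree (\<mu> + \<nu>) = e_degree \<mu> + e_degree \<nu>"
  unfolding e_degree_def by (rule setsum_keys_plus_distrib) (auto simp: distrib_left)

lemma e_degree_zero [simp]: "e_degree 0 = 0"
  by (simp add: e_degree_def)

lemma e_degree_single [simp]: "e_degree (Poly_Mapping.single x c) = e_weight x * c"
  by (cases "c = 0") (simp_all add: e_degree_def)

lemma e_degree_sum: "e_degree (\<Sum>j\<in>J. \<mu> j) = (\<Sum>j\<in>J. e_degree (\<mu> j))"
  by (induction J rule: infinite_finite_induct) (auto simp: e_degree_add)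

lemma e_degree_mon_drop_v: "e_degree (mon_drop_v \<mu>) = e_degree \<mu>"
  using e_degree_add[of "mon_drop_v \<mu>" "Poly_Mapping.single Vv (v_exponent \<mu>)"]
  by (simp add: mon_drop_v_plus_v_exponent e_weight_def)

lemma hdeg_eq_e_degree: "hdeg n \<mu> = int (e_degree \<mu>) - int (2^n - 1) * int (v_exponent \<mu>)"
proof -
  have wt: "wt n x = int (e_weight x) - (if x = Vv then int (2^n - 1) else 0)" for x
    by (cases x) (auto simp: wt_def e_weight_def of_nat_diff)
  have "hdeg n \<mu> = (\<Sum>x\<in>Poly_Mapping.keys \<mu>. int (e_weight x * Poly_Mapping.lookup \<mu> x)
      - (if x = Vv then int (2^n - 1) * int (Poly_Mapping.lookup \<mu> x) else 0))"
    unfolding hdeg_def wt by (rule sum.cong) (auto simp: algebra_simps)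
  also have "\<dots> = int (e_degree \<mu>) - int (2^n - 1) * int (v_exponent \<mu>)"
    by (simp add: sum_subtractf e_degree_def sum.delta' v_exponent_def in_keys_iff)
  finally show ?thesis .
qed

lemma hdeg_mod_eq_e_degree_mod:
  "hdeg n \<mu> mod int (2^n - 1) = int (e_degree \<mu> mod (2^n - 1))"
proof -
  have "hdeg n \<mu> = int (e_degree \<mu>) + (- int (v_exponent \<mu>)) * int (2^n - 1)"
    by (simp add: hdeg_eq_e_degree)
  then show ?thesis
    by (simp only: mod_mult_self1) (simp add: of_nat_mod)
qed

lemma hcomp_eq_lin_ext:
  "hcomp n d p = lin_ext (\<lambda>\<mu>. if hdeg n \<mu> = d then Poly_Mapping.single \<mu> 1 else 0) p"
proof (rule poly_mapping_eqI)
  fix \<rho>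
  have fin: "finite {\<mu>. (if hdeg n \<mu> = d then Poly_Mapping.lookup p \<mu> else 0) \<noteq> 0}"
    by (rule finite_subset[of _ "Poly_Mapping.keys p"]) (auto simp: in_keys_iff)
  have "Poly_Mapping.lookup (lin_ext (\<lambda>\<mu>. if hdeg n \<mu> = d then Poly_Mapping.single \<mu> 1 else 0) p) \<rho>
      = (\<Sum>\<mu>\<in>Poly_Mapping.keys p. if \<mu> = \<rho> then (if hdeg n \<rho> = d then Poly_Mapping.lookup p \<mu> else 0) else 0)"
    unfolding lookup_lin_ext by (rule sum.cong) (auto simp: lookup_single when_def)
  also have "\<dots> = (if hdeg n \<rho> = d then Poly_Mapping.lookup p \<rho> else 0)"
    by (simp add: sum.delta in_keys_iff)
  finally show "Poly_Mapping.lookup (hcomp n d p) \<rho> =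
      Poly_Mapping.lookup (lin_ext (\<lambda>\<mu>. if hdeg n \<mu> = d then Poly_Mapping.single \<mu> 1 else 0) p) \<rho>"
    unfolding hcomp_def using fin by simp
qed

section \<open>Lifting from \<open>v = 1\<close> back to \<open>I\<close>\<close>

lemma is_ideal_sum: "is_ideal I \<Longrightarrow> (\<And>d. d \<in> D \<Longrightarrow> Q d \<in> I) \<Longrightarrow> (\<Sum>d\<in>D. Q d) \<in> I"
  unfolding is_ideal_def by (induction D rule: infinite_finite_induct) auto

lemma saturated_power: "saturated I \<Longrightarrow> mvar Vv ^ c * x \<in> I \<Longrightarrow> x \<in> I"
proof (induction c)
  case (Suc c)
  then have "mvar Vv * (mvar Vv ^ c * x) \<in> I" by (simp add: mult.assoc)
  then show ?case using Suc unfolding saturated_def by blast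
qed simp

text \<open>Multiplies a monomial of \<open>e\<close>-degree \<open>a\<close> modulo \<open>N\<close> by the power of \<open>v\<close> that brings its
  degree down to \<open>a - C N\<close>, and discards all other monomials.\<close>
definition v_lift :: "nat \<Rightarrow> nat \<Rightarrow> nat \<Rightarrow> (hvar \<Rightarrow>\<^sub>0 nat) \<Rightarrow> hvar mpoly" where
  "v_lift N a C \<mu> =
     (if e_degree \<mu> mod N = a then Poly_Mapping.single (\<mu> + Poly_Mapping.single Vv ((e_degree \<mu> - a) div N + C)) 1 else 0)"

lemma v_shift_monomial:
  fixes n a C :: nat
  defines "N \<equiv> 2^n - 1"
  assumes "N > 0" and a: "e_degree \<mu> mod N = a" and C: "v_exponent \<mu> \<le> C"
  shows "\<mu> + Poly_Mapping.single Vv (nat ((hdeg n \<mu> - int a) div int N + int C))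
       = mon_drop_v \<mu> + Poly_Mapping.single Vv ((e_degree \<mu> - a) div N + C)"
proof -
  have "a \<le> e_degree \<mu>" using a by (metis mod_less_eq_dividend)
  then have ediv: "(int (e_degree \<mu>) - int a) div int N = int ((e_degree \<mu> - a) div N)"
    by (simp add: of_nat_diff zdiv_int)
  have h: "hdeg n \<mu> - int a = (int (e_degree \<mu>) - int a) + (- int (v_exponent \<mu>)) * int N"
    unfolding hdeg_eq_e_degree N_def by (simp add: algebra_simps)
  have "(hdeg n \<mu> - int a) div int N = - int (v_exponent \<mu>) + (int (e_degree \<mu>) - int a) div int N"
    unfolding h by (rule div_mult_self1) (use \<open>N > 0\<close> in simp)
  then have "nat ((hdeg n \<mu> - int a) div int N + int C) = (e_degree \<mu> - a) div N + C - v_exponent \<mu>"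
    unfolding ediv using C by simp
  then show ?thesis
    using C by (subst (1) mon_drop_v_plus_v_exponent[symmetric])
      (simp add: add.assoc flip: single_add)
qed

lemma mvar_Vv_power_mult_hcomp:
  "mvar Vv ^ t * hcomp n d p = lin_ext (\<lambda>\<mu>. if hdeg n \<mu> = d then Poly_Mapping.single (\<mu> + Poly_Mapping.single Vv t) 1 else 0) p"
  unfolding hcomp_eq_lin_ext mult_lin_ext
  by (intro lin_ext_cong) (simp add: mvar_power mult_single add.commute)

text \<open>By homogeneity, \<open>v_lift\<close> applied to \<open>z|\<^sub>v\<^sub>=\<^sub>1\<close> is a sum of homogeneous components of \<open>z\<close>
  times powers of \<open>v\<close>.\<close>
lemma v_lift_drop_v_mem:
  fixes n a C :: nat
  assumes I: "is_ideal I" and hom: "homogeneous_ideal n I" and "n \<ge> 1"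
    and z: "z \<in> I" and C: "\<And>\<mu>. \<mu> \<in> Poly_Mapping.keys z \<Longrightarrow> v_exponent \<mu> \<le> C"
  shows "lin_ext (v_lift (2^n - 1) a C) (drop_v z) \<in> I"
proof -
  define N where "N = (2::nat)^n - 1"
  have "N > 0"
    using one_less_power[of "2::nat" n] \<open>n \<ge> 1\<close> by (simp add: N_def)
  define T where "T d = nat ((d - int a) div int N + int C)" for d
  define D where "D = {d \<in> hdeg n ` Poly_Mapping.keys z. d mod int N = int a}"
  have fin: "finite D" by (simp add: D_def)
  have "(\<Sum>d\<in>D. mvar Vv ^ T d * hcomp n d z)
      = lin_ext (\<lambda>\<mu>. \<Sum>d\<in>D. if hdeg n \<mu> = d then Poly_Mapping.single (\<mu> + Poly_Mapping.single Vv (T d)) 1 else 0) z"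
    by (simp add: mvar_Vv_power_mult_hcomp lin_ext_fun_sum[OF fin])
  also have "\<dots> = lin_ext (\<lambda>\<mu>. v_lift N a C (mon_drop_v \<mu>)) z"
  proof (rule lin_ext_cong)
    fix \<mu> assume \<mu>: "\<mu> \<in> Poly_Mapping.keys z"
    then have "hdeg n \<mu> \<in> D \<longleftrightarrow> e_degree \<mu> mod N = a"
      using hdeg_mod_eq_e_degree_mod[of n \<mu>] by (auto simp: D_def N_def)
    then have "(\<Sum>d\<in>D. if hdeg n \<mu> = d then Poly_Mapping.single (\<mu> + Poly_Mapping.single Vv (T d)) (1::bit) else 0)
      = (if e_degree \<mu> mod N = a then Poly_Mapping.single (\<mu> + Poly_Mapping.single Vv (T (hdeg n \<mu>))) 1 else 0)"
      using fin by (simp add: sum.delta)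
    also have "\<dots> = v_lift N a C (mon_drop_v \<mu>)"
      using v_shift_monomial[OF _ _ C[OF \<mu>], of n a] \<open>N > 0\<close>
      by (simp add: v_lift_def e_degree_mon_drop_v T_def N_def)
    finally show "(\<Sum>d\<in>D. if hdeg n \<mu> = d then Poly_Mapping.single (\<mu> + Poly_Mapping.single Vv (T d)) 1 else 0)
      = v_lift N a C (mon_drop_v \<mu>)" .
  qed
  also have "\<dots> = lin_ext (v_lift N a C) (drop_v z)"
    by (simp add: drop_v_def lin_ext_lin_ext)
  finally have "lin_ext (v_lift N a C) (drop_v z) = (\<Sum>d\<in>D. mvar Vv ^ T d * hcomp n d z)" ..
  also have "\<dots> \<in> I"
    using hom z I unfolding homogeneous_ideal_def is_ideal_def by (intro is_ideal_sum[OF I]) blast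
  finally show ?thesis by (simp add: N_def)
qed

lemma mvar_E_mem_of_drop_v:
  fixes n a :: nat
  assumes I: "is_ideal I" and hom: "homogeneous_ideal n I" and sat: "saturated I"
    and a: "a < 2^n - 1" and e: "mvar (E a) \<in> drop_v_plus_span I (\<lambda>\<mu>. e_degree \<mu> mod (2^n - 1) \<noteq> a)"
  shows "mvar (E a) \<in> I"
proof -
  obtain z w where eq: "mvar (E a) = drop_v z + w" and z: "z \<in> I"
    and w: "\<And>\<mu>. \<mu> \<in> Poly_Mapping.keys w \<Longrightarrow> e_degree \<mu> mod (2^n - 1) \<noteq> a"
    using e unfolding drop_v_plus_span_def by blast
  define C where "C = Max (insert 0 (v_exponent ` Poly_Mapping.keys z))"
  have "n \<ge> 1" using a by (cases n) auto
  have "v_exponent \<mu> \<le> C" if "\<mu> \<in> Poly_Mapping.keys z" for \<mu>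
    unfolding C_def using that by (intro Max_ge) auto
  then have "lin_ext (v_lift (2^n - 1) a C) (drop_v z) \<in> I"
    by (rule v_lift_drop_v_mem[OF I hom \<open>n \<ge> 1\<close> z])
  moreover have "drop_v z = mvar (E a) + w"
    using eq by (metis add.assoc mpoly_add_self add_0_right)
  moreover have "lin_ext (v_lift (2^n - 1) a C) w = 0"
    using w by (intro lin_ext_eq_0) (simp add: v_lift_def)
  moreover have "lin_ext (v_lift (2^n - 1) a C) (mvar (E a)) = mvar Vv ^ C * mvar (E a)"
  proof -
    have "mvar Vv ^ C * mvar (E a) = Poly_Mapping.single (Poly_Mapping.single Vv C + Poly_Mapping.single (E a) 1) 1"
      by (simp only: mvar_power) (simp add: mvar_def mult_single)
    then show ?thesis
      using a by (simp add: mvar_def v_lift_def e_weight_def add.commute)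
  qed
  ultimately have "mvar Vv ^ C * mvar (E a) \<in> I"
    by (simp add: lin_ext_add)
  then show ?thesis by (rule saturated_power[OF sat])
qed

section \<open>The coproduct of \<open>e\<^bsub>2^n-1-2k\<^esub>\<close> against functionals\<close>

lemma sum_power_diff_lessThan: "(\<Sum>l<j. (2::nat) ^ (j - l)) + 2 = 2 ^ (j + 1)"
proof (induction j)
  case (Suc j)
  have "(\<Sum>l<j. (2::nat) ^ (Suc j - l)) = 2 * (\<Sum>l<j. 2 ^ (j - l))"
    unfolding sum_distrib_left by (rule sum.cong) (auto simp: Suc_diff_le)
  with Suc show ?case by simp
qed simp

text \<open>The arithmetic behind the vanishing of the terms \<open>j \<ge> 1\<close> of \<open>\<Delta>(e\<^bsub>N-2k\<^esub>)\<close>: their right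
  factors have degree \<open>N - q(1 + s)\<close> modulo \<open>N\<close> with \<open>s\<close> even, which cannot be \<open>N - q 2\<^sup>j\<close>.\<close>
lemma complement_sum_mod_ne:
  fixes N k j q :: nat
  assumes k: "k = 2 ^ j * q" and "k \<ge> 1" and kN: "2 * k < N" and "j \<ge> 1" and Y: "Y \<subseteq> {..<j}"
  shows "((N - k div 2 ^ j) + (\<Sum>l\<in>Y. N - k div 2 ^ l)) mod N \<noteq> N - k"
proof
  assume H: "((N - k div 2 ^ j) + (\<Sum>l\<in>Y. N - k div 2 ^ l)) mod N = N - k"
  have "q \<ge> 1" using k \<open>k \<ge> 1\<close> by (cases q) auto
  have complement: "(N - k div 2 ^ l) + q * 2 ^ (j - l) = N" if "l \<le> j" for l
  proof -
    have k': "k = 2 ^ l * (q * 2 ^ (j - l))"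
      using k that by (simp add: power_add[symmetric] algebra_simps)
    then have "k div 2 ^ l = q * 2 ^ (j - l)" by simp
    moreover have "q * 2 ^ (j - l) \<le> k"
      by (subst k') simp
    ultimately show ?thesis using kN by simp
  qed
  define s where "s = (\<Sum>l\<in>Y. (2::nat) ^ (j - l))"
  have "(\<Sum>l\<in>Y. N - k div 2 ^ l) + q * s = (\<Sum>l\<in>Y. (N - k div 2 ^ l) + q * 2 ^ (j - l))"
    unfolding s_def sum_distrib_left sum.distrib ..
  also have "\<dots> = card Y * N"
    using Y by (simp add: complement subset_iff less_imp_le)
  finally have "(N - k div 2 ^ j) + (\<Sum>l\<in>Y. N - k div 2 ^ l) + q * (1 + s) = N + card Y * N"
    using complement[of j] by (simp add: algebra_simps)
  moreover have "q * (1 + s) < N"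
  proof -
    have "s + 2 \<le> 2 * 2 ^ j"
      using sum_mono2[of "{..<j}" Y "\<lambda>l. (2::nat) ^ (j - l)"] sum_power_diff_lessThan[of j] Y
      by (simp add: s_def)
    then have "q * (s + 2) \<le> q * (2 * 2 ^ j)" by (rule mult_le_mono2)
    then show ?thesis using k kN by (simp add: algebra_simps)
  qed
  ultimately have sum_eq: "(N - k div 2 ^ j) + (\<Sum>l\<in>Y. N - k div 2 ^ l) = (N - q * (1 + s)) + card Y * N"
    by linarith
  have "((N - k div 2 ^ j) + (\<Sum>l\<in>Y. N - k div 2 ^ l)) mod N = (N - q * (1 + s)) mod N"
    unfolding sum_eq by (rule mod_mult_self1)
  also have "\<dots> = N - q * (1 + s)"
    using \<open>q * (1 + s) < N\<close> \<open>q \<ge> 1\<close> by (intro mod_less) simp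
  finally have "((N - k div 2 ^ j) + (\<Sum>l\<in>Y. N - k div 2 ^ l)) mod N = N - q * (1 + s)" .
  then have "q * (1 + s) = q * 2 ^ j"
    using H \<open>q * (1 + s) < N\<close> kN k by (simp add: mult.commute)
  then have "1 + s = 2 ^ j" using \<open>q \<ge> 1\<close> by (metis mult_cancel1 not_one_le_zero)
  moreover have "even s" unfolding s_def using Y by (intro dvd_sum) (auto simp: subset_iff)
  moreover have "even ((2::nat) ^ j)" using \<open>j \<ge> 1\<close> by simp
  ultimately show False by (metis even_plus_one_iff add.commute)
qed

definition delta_term :: "(nat \<Rightarrow> nat) \<Rightarrow> nat \<Rightarrow> tvar mpoly" where
  "delta_term B j = mvar TV ^ (j + 1) * mvar (TL (B j)) * mvar (TR (B j)) * (\<Prod>l<j. mvar (TL (B l)) + mvar (TR (B l)))"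

lemma dgen_complement_double:
  assumes "n \<ge> 1" and "k \<ge> 1" and kN: "2 * k < 2 ^ n - 1"
  shows "dgen n (2 ^ n - 1 - 2 * k) = mvar (TL (2 ^ n - 1 - 2 * k)) + mvar (TR (2 ^ n - 1 - 2 * k))
    + (\<Sum>j\<le>multiplicity 2 k. delta_term (\<lambda>l. br n (k div 2 ^ l)) j)"
proof -
  define i where "i = 2 ^ n - 1 - 2 * k"
  have "(2::nat) ^ n = 2 * 2 ^ (n - 1)"
    using \<open>n \<ge> 1\<close> by (cases n) auto
  then have "odd i" unfolding i_def using kN by presburger
  then have "dgen n i = delta_odd n i"
    by (subst dgen.simps) (metis even_zero)
  moreover have "i < 2 ^ n - 1" "(2 ^ n - 1 - i) div 2 = k"
    using \<open>k \<ge> 1\<close> kN by (auto simp: i_def)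
  ultimately show ?thesis
    unfolding i_def by (simp add: delta_odd_def Let_def delta_term_def)
qed

lemma delta_term_expand:
  "delta_term B j = (\<Sum>X\<in>Pow {..<j}. Poly_Mapping.single
     (Poly_Mapping.single TV (j + 1) + Poly_Mapping.single (TL (B j)) 1 + Poly_Mapping.single (TR (B j)) 1
      + (\<Sum>l\<in>X. Poly_Mapping.single (TL (B l)) 1) + (\<Sum>l\<in>{..<j} - X. Poly_Mapping.single (TR (B l)) 1)) 1)"
proof -
  have expand: "(\<Prod>l<j. mvar (TL (B l)) + mvar (TR (B l)))
      = (\<Sum>X\<in>Pow {..<j}. (\<Prod>l\<in>X. mvar (TL (B l))) * (\<Prod>l\<in>{..<j} - X. mvar (TR (B l))))"
    by (rule prod_add) simp
  have head: "mvar TV ^ (j + 1) * mvar (TL (B j)) * mvar (TR (B j)) = Poly_Mapping.single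
      (Poly_Mapping.single TV (j + 1) + Poly_Mapping.single (TL (B j)) 1 + Poly_Mapping.single (TR (B j)) 1) (1::bit)"
    by (simp only: mvar_power) (simp add: mvar_def mult_single)
  show ?thesis
    unfolding delta_term_def expand head sum_distrib_left
  proof (rule sum.cong[OF refl])
    fix X assume "X \<in> Pow {..<j}"
    then have "finite X" using finite_subset by blast
    then show "Poly_Mapping.single (Poly_Mapping.single TV (j + 1) + Poly_Mapping.single (TL (B j)) 1
        + Poly_Mapping.single (TR (B j)) 1) 1 * ((\<Prod>l\<in>X. mvar (TL (B l))) * (\<Prod>l\<in>{..<j} - X. mvar (TR (B l))))
      = Poly_Mapping.single (Poly_Mapping.single TV (j + 1) + Poly_Mapping.single (TL (B j)) 1 + Poly_Mapping.single (TR (B j)) 1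
        + (\<Sum>l\<in>X. Poly_Mapping.single (TL (B l)) 1) + (\<Sum>l\<in>{..<j} - X. Poly_Mapping.single (TR (B l)) 1)) 1"
      by (simp add: prod_mvar mult_single add.assoc)
  qed
qed

lemma contract_right_delta_term:
  "contract_right f (delta_term B j) =
    (\<Sum>X\<in>Pow {..<j}. mconst (f (Poly_Mapping.single (Poly_Mapping.single (E (B j)) 1 + (\<Sum>l\<in>{..<j} - X. Poly_Mapping.single (E (B l)) 1)) 1))
      * Poly_Mapping.single (Poly_Mapping.single (E (B j)) 1 + (\<Sum>l\<in>X. Poly_Mapping.single (E (B l)) 1)) 1)"
  unfolding delta_term_expand contract_right_sum contract_right_single
  by (simp add: mon_map_add mon_map_sum right_var_def left_var_def)

lemma contract_right_dgen:
  fixes n k :: nat and f :: "hvar mpoly \<Rightarrow> bit"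
  assumes vanish: "\<And>\<mu>. e_degree \<mu> mod (2 ^ n - 1) \<noteq> 2 ^ n - 1 - k \<Longrightarrow> f (Poly_Mapping.single \<mu> 1) = 0"
    and "n \<ge> 1" and "k \<ge> 1" and kN: "2 * k < 2 ^ n - 1"
  shows "contract_right f (dgen n (2 ^ n - 1 - 2 * k)) = mconst (f (mvar (E (2 ^ n - 1 - k)))) * mvar (E (2 ^ n - 1 - k))"
proof -
  define N where "N = (2::nat) ^ n - 1"
  define B where "B l = br n (k div 2 ^ l)" for l
  have "B 0 = N - k" by (simp add: B_def br_def N_def)
  have primitive_left: "contract_right f (mvar (TL (N - 2 * k))) = 0"
  proof -
    have "f (Poly_Mapping.single 0 1) = 0"
      using \<open>k \<ge> 1\<close> kN by (intro vanish) simp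
    then show ?thesis by (simp add: mvar_def contract_right_single right_var_def)
  qed
  have primitive_right: "contract_right f (mvar (TR (N - 2 * k))) = 0"
  proof -
    have "f (Poly_Mapping.single (Poly_Mapping.single (E (N - 2 * k)) 1) 1) = 0"
      using \<open>k \<ge> 1\<close> kN by (intro vanish) (simp add: e_weight_def N_def)
    then show ?thesis by (simp add: mvar_def contract_right_single right_var_def)
  qed
  have higher: "contract_right f (delta_term B j) = 0" if "j \<in> {..multiplicity 2 k} - {0}" for j
  proof -
    have "2 ^ j dvd k" using that by (intro multiplicity_dvd') simp
    then obtain q where q: "k = 2 ^ j * q" by blast
    have "f (Poly_Mapping.single (Poly_Mapping.single (E (B j)) 1 + (\<Sum>l\<in>{..<j} - X. Poly_Mapping.single (E (B l)) 1)) 1) = 0"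
      for X
    proof (rule vanish)
      have "((N - k div 2 ^ j) + (\<Sum>l\<in>{..<j} - X. N - k div 2 ^ l)) mod N \<noteq> N - k"
        by (rule complement_sum_mod_ne[OF q \<open>k \<ge> 1\<close>]) (use that kN in \<open>auto simp: N_def\<close>)
      then show "e_degree (Poly_Mapping.single (E (B j)) 1 + (\<Sum>l\<in>{..<j} - X. Poly_Mapping.single (E (B l)) 1))
          mod (2 ^ n - 1) \<noteq> 2 ^ n - 1 - k"
        by (simp add: e_degree_add e_degree_sum e_weight_def B_def br_def N_def)
    qed
    then show ?thesis by (simp add: contract_right_delta_term)
  qed
  have "contract_right f (dgen n (N - 2 * k)) = (\<Sum>j\<le>multiplicity 2 k. contract_right f (delta_term B j))"
    unfolding N_def B_def dgen_complement_double[OF \<open>n \<ge> 1\<close> \<open>k \<ge> 1\<close> kN] contract_right_add contract_right_sum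
    using primitive_left primitive_right by (simp add: N_def)
  also have "\<dots> = contract_right f (delta_term B 0)"
    using higher by (simp add: sum.remove[of "{..multiplicity 2 k}" 0])
  also have "\<dots> = mconst (f (mvar (E (N - k)))) * mvar (E (N - k))"
    using \<open>B 0 = N - k\<close> by (simp add: contract_right_delta_term mvar_def)
  finally show ?thesis by (simp add: N_def)
qed

interpretation mvs: vector_space "\<lambda>(c::bit) (p::hvar mpoly). mconst c * p"
  by unfold_locales (simp_all only: distrib_left mconst_add distrib_right mconst_mult mult.assoc mconst_1 mult_1)

interpretation mvs_bit: vector_space_pair "\<lambda>(c::bit) (p::hvar mpoly). mconst c * p" "(*) :: bit \<Rightarrow> bit \<Rightarrow> bit"
  by unfold_locales (simp_all only: distrib_left distrib_right mult.assoc mult_1)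

lemma separating_functional:
  assumes S: "mvs.subspace S" and e: "e \<notin> S"
  obtains f :: "hvar mpoly \<Rightarrow> bit"
  where "\<And>x y. f (x + y) = f x + f y" "\<And>x. x \<in> S \<Longrightarrow> f x = 0" "f e = 1"
proof -
  obtain B where B: "B \<subseteq> S" "mvs.independent B" "S \<subseteq> mvs.span B"
    using mvs.maximal_independent_subset[of S] by blast
  have "e \<notin> mvs.span B" using e B(1) S mvs.span_minimal by blast
  then have indep: "mvs.independent (insert e B)"
    by (rule mvs.independent_insertI[OF _ B(2)])
  define f where "f = mvs_bit.construct (insert e B) (\<lambda>b. if b = e then 1 else 0)"
  have lin: "Vector_Spaces.linear (\<lambda>(c::bit) (p::hvar mpoly). mconst c * p) ((*) :: bit \<Rightarrow> bit \<Rightarrow> bit) f"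
    unfolding f_def by (rule mvs_bit.linear_construct[OF indep])
  have f_basis: "f b = (if b = e then 1 else 0)" if "b \<in> insert e B" for b
    unfolding f_def by (rule mvs_bit.construct_basis[OF indep that])
  show ?thesis
  proof (rule that[of f])
    show "f (x + y) = f x + f y" for x y
      by (rule mvs_bit.linear_add[OF lin])
    show "f x = 0" if "x \<in> S" for x
    proof (rule mvs_bit.linear_eq_0_on_span[OF lin])
      show "f b = 0" if "b \<in> B" for b
        using f_basis[of b] that B(1) e by auto
      show "x \<in> mvs.span B" using that B(3) by blast
    qed
    show "f e = 1" using f_basis[of e] by simp
  qed
qed

lemma subspace_drop_v_plus_span:
  assumes "is_ideal I"
  shows "mvs.subspace (drop_v_plus_span I P)"
  unfolding drop_v_plus_span_def
proof (rule mvs.subspaceI)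
  have "0 \<in> I" and I_add: "\<And>x y. x \<in> I \<Longrightarrow> y \<in> I \<Longrightarrow> x + y \<in> I"
    using assms unfolding is_ideal_def by auto
  then have "(0::hvar mpoly) = drop_v 0 + 0 \<and> 0 \<in> I \<and> (\<forall>\<mu>\<in>Poly_Mapping.keys (0::hvar mpoly). P \<mu>)"
    by simp
  then show zero: "0 \<in> {drop_v z + w | z w. z \<in> I \<and> (\<forall>\<mu>\<in>Poly_Mapping.keys w. P \<mu>)}" by blast
  show "x + y \<in> {drop_v z + w | z w. z \<in> I \<and> (\<forall>\<mu>\<in>Poly_Mapping.keys w. P \<mu>)}"
    if x: "x \<in> {drop_v z + w | z w. z \<in> I \<and> (\<forall>\<mu>\<in>Poly_Mapping.keys w. P \<mu>)}"
      and y: "y \<in> {drop_v z + w | z w. z \<in> I \<and> (\<forall>\<mu>\<in>Poly_Mapping.keys w. P \<mu>)}" for x y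
  proof -
    obtain z1 w1 z2 w2 where "x = drop_v z1 + w1" "z1 \<in> I" "\<forall>\<mu>\<in>Poly_Mapping.keys w1. P \<mu>"
      "y = drop_v z2 + w2" "z2 \<in> I" "\<forall>\<mu>\<in>Poly_Mapping.keys w2. P \<mu>"
      using x y by blast
    moreover have "Poly_Mapping.keys (w1 + w2) \<subseteq> Poly_Mapping.keys w1 \<union> Poly_Mapping.keys w2"
      by (rule keys_add)
    ultimately have "x + y = drop_v (z1 + z2) + (w1 + w2) \<and> z1 + z2 \<in> I \<and> (\<forall>\<mu>\<in>Poly_Mapping.keys (w1 + w2). P \<mu>)"
      using I_add by (auto simp: drop_v_add algebra_simps)
    then show ?thesis by blast
  qed
  show "mconst c * x \<in> {drop_v z + w | z w. z \<in> I \<and> (\<forall>\<mu>\<in>Poly_Mapping.keys w. P \<mu>)}"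
    if "x \<in> {drop_v z + w | z w. z \<in> I \<and> (\<forall>\<mu>\<in>Poly_Mapping.keys w. P \<mu>)}" for c x
    using that zero by (cases c) auto
qed

lemma mvar_E_complement_mem_drop_v_plus_span:
  fixes n k :: nat
  assumes bi: "bi_ideal n m I" and "n \<ge> 1" and "k \<ge> 1" and kN: "2 * k < 2 ^ n - 1"
    and e: "mvar (E (2 ^ n - 1 - 2 * k)) \<in> I"
  shows "mvar (E (2 ^ n - 1 - k)) \<in> drop_v_plus_span I (\<lambda>\<mu>. e_degree \<mu> mod (2 ^ n - 1) \<noteq> 2 ^ n - 1 - k)"
    (is "_ \<in> ?S")
proof (rule ccontr)
  assume "mvar (E (2 ^ n - 1 - k)) \<notin> ?S"
  have I: "is_ideal I" using bi unfolding bi_ideal_def H_ideal_def by blast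
  obtain f :: "hvar mpoly \<Rightarrow> bit" where add: "\<And>x y. f (x + y) = f x + f y"
    and vanish: "\<And>x. x \<in> ?S \<Longrightarrow> f x = 0" and "f (mvar (E (2 ^ n - 1 - k))) = 1"
    using separating_functional[OF subspace_drop_v_plus_span[OF I] \<open>mvar (E (2 ^ n - 1 - k)) \<notin> ?S\<close>] by blast
  have "contract_right f (dgen n (2 ^ n - 1 - 2 * k)) \<in> drop_v ` I"
    using vanish[OF drop_v_mem_drop_v_plus_span]
    by (rule contract_right_tensor_ideal[OF add _ I Delta_mem_tensor_ideal[OF bi e]])
  moreover have "0 \<in> I" using I by (simp add: is_ideal_def)
  then have "contract_right f (dgen n (2 ^ n - 1 - 2 * k)) = mvar (E (2 ^ n - 1 - k))"
    using contract_right_dgen[where n=n and k=k and f=f, OF vanish[OF single_mem_drop_v_plus_span]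
        \<open>n \<ge> 1\<close> \<open>k \<ge> 1\<close> kN] \<open>f (mvar (E (2 ^ n - 1 - k))) = 1\<close>
    by simp
  ultimately show False
    using \<open>mvar (E (2 ^ n - 1 - k)) \<notin> ?S\<close> drop_v_mem_drop_v_plus_span by auto
qed

theorem propositionA3p1:
  fixes n m k :: nat and I :: "hvar mpoly set"
  assumes "n \<ge> 1" and "m \<le> 2 ^ (n + 1)"
    and "bi_ideal n m I" and "homogeneous_ideal n I" and "saturated I"
    and "k \<ge> 1" and "int (2 ^ n) - 1 - 2 * int k \<ge> 1"
    and "mvar (E (2 ^ n - 1 - 2 * k)) \<in> I"
  shows "mvar (E (2 ^ n - 1 - k)) \<in> I"
proof -
  have I: "is_ideal I" using assms(3) unfolding bi_ideal_def H_ideal_def by blast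
  have kN: "2 * k < 2 ^ n - 1" using assms(7) by linarith
  then have "2 ^ n - 1 - k < 2 ^ n - 1" using assms(6) by linarith
  then show ?thesis
    using mvar_E_complement_mem_drop_v_plus_span[OF assms(3,1,6) kN assms(8)]
    by (rule mvar_E_mem_of_drop_v[OF I assms(4,5)])
qed

end
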